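(* Let $d\ge1$, $k\ge1$ and $p\ge1$ an integer. There are constants $\mu_p,\lambda_p>0$ depending only on $p$ and $d$ such that for all $[\boldsymbol m,\boldsymbol n]\in\mathbb Z^{2d}$, $$\mu_p\big(1+|\boldsymbol x^{k,\boldsymbol m}|^2+|\boldsymbol \xi^{k,\boldsymbol n}|^2\big)^p\le\|\Psi_{k,\boldsymbol m,\boldsymbol n}\|^2_{\widehat H^p_k(\mathbb R^d)}\le\lambda_p\big(1+|\boldsymbol x^{k,\boldsymbol m}|^2+|\boldsymbol \xi^{k,\boldsymbol n}|^2\big)^p.$$
   Context: For $[\boldsymbol m,\boldsymbol n]\in\mathbb Z^{2d}$ set $\boldsymbol x^{k,\boldsymbol m}=\sqrt{\pi/k}\,\boldsymbol m$, $\boldsymbol \xi^{k,\boldsymbol n}=\sqrt{\pi/k}\,\boldsymbol n$ and $\Psi_{k,\boldsymbol m,\boldsymbol n}(\boldsymbol x)=(k/\pi)^{d/4}e^{-\frac k2|\boldsymbol x-\boldsymbol x^{k,\boldsymbol m}|^2}e^{ik(\boldsymbol x-\boldsymbol x^{k,\boldsymbol m})\cdot\boldsymbol \xi^{k,\boldsymbol n}}$. For Schwartz $v$, $\|v\|^2_{\widehat H^p_k(\mathbb R^d)}=\sum_{[\boldsymbol a]\le p}\sum_{q=0}^{p-[\boldsymbol a]}k^{-2[\boldsymbol a]}\||\boldsymbol x|^q\partial^{\boldsymbol a}v\|^2_{L^2(\mathbb R^d)}$, where $[\boldsymbol a]=a_1+\dots+a_d$. *)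

theory Defs
  imports "HOL-Analysis.Analysis" "HOL-Library.Multiset"
begin

text \<open>Points of R^d are vectors real^'n with d = CARD('n); multi-indices are 'n \<Rightarrow> nat.\<close>

definition lattice_pt :: "real \<Rightarrow> int^'n \<Rightarrow> real^'n" where
  "lattice_pt k m = sqrt (pi / k) *\<^sub>R (\<chi> i. real_of_int (m $ i))"

definition Psi :: "real \<Rightarrow> int^'n \<Rightarrow> int^'n \<Rightarrow> real^'n \<Rightarrow> complex" where
  "Psi k m n x =
     complex_of_real ((k / pi) powr (real CARD('n) / 4))
     * complex_of_real (exp (- (k / 2) * (norm (x - lattice_pt k m))\<^sup>2))
     * cis (k * ((x - lattice_pt k m) \<bullet> lattice_pt k n))"

definition pderiv_dir :: "'n::finite \<Rightarrow> (real^'n \<Rightarrow> complex) \<Rightarrow> real^'n \<Rightarrow> complex" where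
  "pderiv_dir i f x = vector_derivative (\<lambda>t::real. f (x + t *\<^sub>R axis i 1)) (at 0)"

definition mi_order :: "('n::finite \<Rightarrow> nat) \<Rightarrow> nat" where
  "mi_order a = (\<Sum>i\<in>UNIV. a i)"

text \<open>multi-index derivative: apply the partial derivatives in direction i exactly a i times
  (in some fixed order; for smooth functions the order is irrelevant)\<close>
definition mi_deriv :: "('n::finite \<Rightarrow> nat) \<Rightarrow> (real^'n \<Rightarrow> complex) \<Rightarrow> real^'n \<Rightarrow> complex" where
  "mi_deriv a f = fold pderiv_dir
      (SOME L. mset L = (\<Sum>i\<in>UNIV. replicate_mset (a i) i)) f"

definition L2_norm_sq :: "(real^'n::finite \<Rightarrow> complex) \<Rightarrow> real" where
  "L2_norm_sq g = (LINT x|lborel. (cmod (g x))\<^sup>2)"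

definition Hhat_norm_sq :: "nat \<Rightarrow> real \<Rightarrow> (real^'n::finite \<Rightarrow> complex) \<Rightarrow> real" where
  "Hhat_norm_sq p k v =
     (\<Sum>a\<in>{a::'n \<Rightarrow> nat. mi_order a \<le> p}. \<Sum>q\<in>{0..p - mi_order a}.
        k powr (- 2 * real (mi_order a))
        * L2_norm_sq (\<lambda>x. complex_of_real (norm x ^ q) * mi_deriv a v x))"

end

theory Submission
  imports Defs "HOL-Probability.Distributions" "HOL-Complex_Analysis.Complex_Analysis"
begin

text \<open>Up to normalisation and a translation by the centre \<open>x\<^sup>k\<^sup>,\<^sup>m\<close>, \<open>Psi\<close> is the tensor
  product of the one-dimensional packets \<open>exp (- k z^2/2 + \<i> k \<xi>\<^sub>i z)\<close>, which are entire functions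
  of \<open>z\<close>; so every derivative of \<open>Psi\<close> is again a product of one-dimensional derivatives.

  Upper bound: Cauchy's inequality on the circle of radius \<open>1 / (k (1 + |u| + |s|))\<close> around a
  real point \<open>u\<close> bounds the \<open>j\<close>-th derivative by \<open>j! e (k (1 + |u| + |s|))^j exp (- k u^2/2)\<close>.
  The power \<open>k^j\<close> is cancelled by the weight \<open>k^(-2[a])\<close> of the norm, the polynomial factors
  are absorbed by half of the Gaussian, and the other half integrates to a constant.

  Lower bound: on the ball of radius \<open>1 / sqrt k\<close> around the centre the Gaussian is at least
  \<open>exp (-1/2)\<close> times its maximum, and for the normalised density this ball carries a mass
  independent of \<open>k\<close>.  This bounds three terms of the norm from below: the \<open>L\<^sup>2\<close> norm itself;
  the moment of order \<open>p\<close>, of size \<open>|x\<^sup>k\<^sup>,\<^sup>m|^p\<close> when the centre is far out; and the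
  \<open>p\<close>-th derivative in a coordinate \<open>i\<close> with large frequency \<open>\<xi>\<^sub>i\<close>, whose Leibniz expansion
  (Gaussian times plane wave) is dominated by the term \<open>(k \<xi>\<^sub>i)^p\<close> in which every derivative
  falls on the plane wave.\<close>

section \<open>Gaussian integrals and \<open>L\<^sup>2\<close> norms\<close>

lemma nn_integral_gaussian:
  "(\<integral>\<^sup>+x. ennreal (exp (- (norm x ^ 2) / 2)) \<partial>(lborel::'a::euclidean_space measure))
     = ennreal (sqrt (2 * pi) ^ DIM('a))"
proof -
  have split: "ennreal (exp (- (norm x ^ 2) / 2)) = (\<Prod>b\<in>Basis. ennreal (exp (- ((x \<bullet> b)^2) / 2)))"
    for x :: 'a
  proof -
    have "(norm x)^2 = (\<Sum>b\<in>Basis. (x \<bullet> b)^2)"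
      unfolding power2_norm_eq_inner by (subst euclidean_inner) (simp add: power2_eq_square)
    then have "exp (- (norm x ^ 2) / 2) = (\<Prod>b\<in>Basis. exp (- ((x \<bullet> b)^2) / 2))"
      by (simp add: exp_sum[symmetric] sum_negf sum_divide_distrib)
    then show ?thesis by (simp add: prod_ennreal)
  qed
  have one_dim: "(\<integral>\<^sup>+t. ennreal (exp (- (t^2) / 2)) \<partial>lborel) = ennreal (sqrt (2 * pi))"
  proof -
    have "(\<integral>\<^sup>+t. ennreal (exp (- (t^2) / 2)) \<partial>lborel)
        = (\<integral>\<^sup>+t. ennreal (sqrt (2 * pi)) * ennreal (std_normal_density t) \<partial>lborel)"
      by (intro nn_integral_cong) (simp add: std_normal_density_def flip: ennreal_mult)
    also have "\<dots> = ennreal (sqrt (2 * pi)) * (\<integral>\<^sup>+t. ennreal (std_normal_density t) \<partial>lborel)"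
      by (simp add: nn_integral_cmult)
    also have "(\<integral>\<^sup>+t. ennreal (std_normal_density t) \<partial>lborel) = 1"
      by (subst nn_integral_eq_integral) auto
    finally show ?thesis by simp
  qed
  have "(\<integral>\<^sup>+x. ennreal (exp (- (norm x ^ 2) / 2)) \<partial>(lborel::'a measure))
      = (\<Prod>b\<in>(Basis::'a set). (\<integral>\<^sup>+t. ennreal (exp (- (t^2) / 2)) \<partial>lborel))"
    unfolding split by (rule nn_integral_lborel_prod) auto
  also have "\<dots> = ennreal (sqrt (2 * pi) ^ DIM('a))"
    unfolding one_dim by (simp add: ennreal_power)
  finally show ?thesis .
qed

lemma nn_integral_gaussian_scaled:
  fixes c :: "'a::euclidean_space"
  assumes k: "k > 0"
  shows "(\<integral>\<^sup>+x. ennreal (exp (- (k * norm (x - c) ^ 2) / 2)) \<partial>lborel)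
       = ennreal (sqrt (2 * pi / k) ^ DIM('a))"
proof -
  define s where "s = 1 / sqrt k"
  have s: "s > 0" "k * s^2 = 1" using k by (auto simp: s_def power_divide)
  have "(\<integral>\<^sup>+x. ennreal (exp (- (k * norm (x - c) ^ 2) / 2)) \<partial>lborel)
      = ennreal (s ^ DIM('a)) * (\<integral>\<^sup>+x. ennreal (exp (- (k * norm (c + s *\<^sub>R x - c) ^ 2) / 2)) \<partial>lborel)"
    using s(1) by (subst lborel_affine[of s c])
      (simp_all add: nn_integral_density nn_integral_distr nn_integral_cmult del: add_diff_cancel_left')
  also have "\<dots> = ennreal (s ^ DIM('a)) * (\<integral>\<^sup>+x. ennreal (exp (- (norm (x::'a) ^ 2) / 2)) \<partial>lborel)"
    using s by (simp add: power_mult_distrib mult.assoc[symmetric])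
  also have "\<dots> = ennreal ((s * sqrt (2 * pi)) ^ DIM('a))"
    unfolding nn_integral_gaussian using s(1) by (simp add: power_mult_distrib ennreal_mult)
  also have "s * sqrt (2 * pi) = sqrt (2 * pi / k)"
    by (simp add: s_def real_sqrt_divide)
  finally show ?thesis .
qed

lemma nn_integral_ge_on_ball:
  fixes f :: "'a::euclidean_space \<Rightarrow> real"
  assumes [measurable]: "f \<in> borel_measurable borel" and r: "r \<ge> 0" and "\<gamma> \<ge> 0"
    and ge: "\<And>x. x \<in> ball c r \<Longrightarrow> \<gamma> \<le> f x"
  shows "ennreal (\<gamma> * (unit_ball_vol (real DIM('a)) * r ^ DIM('a))) \<le> (\<integral>\<^sup>+x. ennreal (f x) \<partial>lborel)"
proof -
  have "ennreal (\<gamma> * (unit_ball_vol (real DIM('a)) * r ^ DIM('a)))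
      = ennreal \<gamma> * ennreal (unit_ball_vol (real DIM('a)) * r ^ DIM('a))"
    using assms by (intro ennreal_mult) auto
  also have "\<dots> = ennreal \<gamma> * emeasure lborel (ball c r)"
    by (simp only: emeasure_ball[OF r])
  also have "\<dots> = (\<integral>\<^sup>+x. ennreal \<gamma> * indicator (ball c r) x \<partial>lborel)"
    by (rule nn_integral_cmult_indicator[symmetric]) simp
  also have "\<dots> \<le> (\<integral>\<^sup>+x. ennreal (f x) \<partial>lborel)"
    by (intro nn_integral_mono) (auto simp: indicator_def intro!: ennreal_leI ge)
  finally show ?thesis .
qed

lemma L2_norm_sq_nonneg: "L2_norm_sq g \<ge> 0"
  unfolding L2_norm_sq_def by (rule integral_nonneg_AE) simp

lemma L2_norm_sq_eq_nn_integral: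
  assumes [measurable]: "g \<in> borel_measurable lborel"
  shows "L2_norm_sq g = enn2real (\<integral>\<^sup>+x. ennreal ((cmod (g x))^2) \<partial>lborel)"
  unfolding L2_norm_sq_def by (rule integral_eq_nn_integral) auto

lemma L2_norm_sq_le:
  assumes "g \<in> borel_measurable lborel" "B \<ge> 0"
    and "(\<integral>\<^sup>+x. ennreal ((cmod (g x))^2) \<partial>lborel) \<le> ennreal B"
  shows "L2_norm_sq g \<le> B"
  using assms enn2real_mono[OF assms(3)] by (simp add: L2_norm_sq_eq_nn_integral)

lemma L2_norm_sq_ge:
  assumes "g \<in> borel_measurable lborel" "\<gamma> \<ge> 0"
    and "(\<integral>\<^sup>+x. ennreal ((cmod (g x))^2) \<partial>lborel) < \<infinity>"
    and "ennreal \<gamma> \<le> (\<integral>\<^sup>+x. ennreal ((cmod (g x))^2) \<partial>lborel)"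
  shows "\<gamma> \<le> L2_norm_sq g"
  using assms enn2real_mono[OF assms(4)] by (simp add: L2_norm_sq_eq_nn_integral)

section \<open>One-dimensional wave packets\<close>

definition wave_packet :: "real \<Rightarrow> real \<Rightarrow> complex \<Rightarrow> complex" where
  "wave_packet k s z = exp (- (of_real k / 2) * z^2 + \<i> * of_real (k * s) * z)"

lemma holomorphic_on_wave_packet [holomorphic_intros]: "wave_packet k s holomorphic_on A"
  unfolding wave_packet_def by (intro holomorphic_intros)

lemma norm_wave_packet_of_real: "norm (wave_packet k s (of_real u)) = exp (- k * u^2 / 2)"
  unfolding wave_packet_def norm_exp_eq_Re by (simp add: power2_eq_square)

lemma wave_packet_eq_mult_exp: "wave_packet k s = (\<lambda>z. wave_packet k 0 z * exp (\<i> * of_real (k * s) * z))"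
  by (simp add: wave_packet_def fun_eq_iff mult_exp_exp algebra_simps)

lemma norm_wave_packet_near_real:
  fixes k r u s :: real
  assumes k: "k \<ge> 1" and r: "r \<ge> 0" and kr: "k * r * (1 + \<bar>u\<bar> + \<bar>s\<bar>) \<le> 1"
    and z: "norm (z - of_real u) \<le> r"
  shows "norm (wave_packet k s z) \<le> exp 1 * exp (- k * u^2 / 2)"
proof -
  define a b where "a = Re z - u" and "b = Im z"
  have a: "\<bar>a\<bar> \<le> r" and b: "\<bar>b\<bar> \<le> r"
    using z abs_Re_le_cmod[of "z - of_real u"] abs_Im_le_cmod[of "z - of_real u"] by (auto simp: a_def b_def)
  have kr_us: "k * r * \<bar>u\<bar> + k * r * \<bar>s\<bar> \<le> 1 - k * r"
    using kr by (simp add: algebra_simps)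
  moreover have "k * r * \<bar>u\<bar> + k * r * \<bar>s\<bar> \<ge> 0" using k r by simp
  ultimately have r1: "r \<le> 1"
    using k r by (smt (verit) mult_le_cancel_right1)
  have "\<bar>u * a\<bar> \<le> r * \<bar>u\<bar>" and "\<bar>s * b\<bar> \<le> r * \<bar>s\<bar>"
    using mult_left_mono[OF a, of "\<bar>u\<bar>"] mult_left_mono[OF b, of "\<bar>s\<bar>"]
    by (simp_all add: abs_mult mult.commute)
  then have "- (r * \<bar>u\<bar>) \<le> u * a" and "- (r * \<bar>s\<bar>) \<le> s * b"
    by (auto dest: abs_le_D2)
  then have "- (k * r * \<bar>u\<bar>) \<le> k * (u * a)" and "- (k * r * \<bar>s\<bar>) \<le> k * (s * b)"
    using mult_left_mono[of _ _ k] k by (fastforce simp: mult.assoc)+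
  moreover have "k * b^2 \<le> k * r"
  proof -
    have "b^2 \<le> r^2" using power_mono[OF b, of 2] by simp
    also have "\<dots> \<le> r" using r r1 by (simp add: power2_eq_square mult_left_le_one_le)
    finally show ?thesis using k by simp
  qed
  moreover have "k * a^2 \<ge> 0" and "k * r \<ge> 0" using k r by simp_all
  moreover have "Re (- (of_real k / 2) * z^2 + \<i> * of_real (k * s) * z)
      = - k * u^2 / 2 - k * (u * a) - k * a^2 / 2 + k * b^2 / 2 - k * (s * b)"
    by (simp add: a_def b_def power2_eq_square field_simps)
  ultimately have "Re (- (of_real k / 2) * z^2 + \<i> * of_real (k * s) * z) \<le> 1 + - k * u^2 / 2"
    using kr_us by linarith
  then show ?thesis
    unfolding wave_packet_def norm_exp_eq_Re by (simp flip: exp_add)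
qed

lemma norm_higher_deriv_wave_packet_le:
  fixes k s u :: real
  assumes k: "k \<ge> 1"
  shows "norm ((deriv ^^ j) (wave_packet k s) (of_real u))
    \<le> fact j * exp 1 * exp (- k * u^2 / 2) * (k * (1 + \<bar>u\<bar> + \<bar>s\<bar>)) ^ j"
proof -
  define r where "r = 1 / (k * (1 + \<bar>u\<bar> + \<bar>s\<bar>))"
  have "1 + \<bar>u\<bar> + \<bar>s\<bar> > 0" by simp
  then have r: "r > 0" "k * r * (1 + \<bar>u\<bar> + \<bar>s\<bar>) = 1" using k by (simp_all add: r_def)
  have "norm ((deriv ^^ j) (wave_packet k s) (of_real u)) \<le> fact j * (exp 1 * exp (- k * u^2 / 2)) / r ^ j"
  proof (rule Cauchy_inequality[OF _ _ r(1)])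
    show "continuous_on (cball (of_real u) r) (wave_packet k s)"
      by (intro holomorphic_on_imp_continuous_on holomorphic_intros)
    fix z :: complex assume "norm (of_real u - z) = r"
    then show "norm (wave_packet k s z) \<le> exp 1 * exp (- k * u^2 / 2)"
      using r by (intro norm_wave_packet_near_real[OF k, where r = r]) (auto simp: norm_minus_commute)
  qed (intro holomorphic_intros)
  also have "\<dots> = fact j * exp 1 * exp (- k * u^2 / 2) * (k * (1 + \<bar>u\<bar> + \<bar>s\<bar>)) ^ j"
    by (simp add: r_def power_divide field_simps)
  finally show ?thesis .
qed

lemma higher_deriv_exp_linear: "(deriv ^^ j) (\<lambda>z. exp (c * z)) = (\<lambda>z. c^j * exp (c * z :: complex))"
proof (induction j)
  case (Suc j)
  have d: "deriv (\<lambda>z. c^j * exp (c * z)) z = c^(Suc j) * exp (c * z)" for z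
    by (rule DERIV_imp_deriv) (auto intro!: derivative_eq_intros)
  show ?case by (simp add: Suc.IH d fun_eq_iff)
qed simp

lemma norm_higher_deriv_wave_packet_ge_leibniz:
  fixes k s u :: real
  assumes k: "k \<ge> 1"
  shows "exp (- k * u^2 / 2) * (k * \<bar>s\<bar>)^p
    - (\<Sum>i=1..p. real (p choose i) * (fact i * exp 1 * exp (- k * u^2 / 2) * (k * (1 + \<bar>u\<bar>))^i)
                   * (k * \<bar>s\<bar>)^(p-i))
    \<le> norm ((deriv ^^ p) (wave_packet k s) (of_real u))"
proof -
  define c where "c = \<i> * of_real (k * s)"
  define e where "e = exp (c * of_real u)"
  define T where "T i = of_nat (p choose i) * (deriv ^^ i) (wave_packet k 0) (of_real u) * (c^(p-i) * e)" for i
  have "wave_packet k s = (\<lambda>z. wave_packet k 0 z * exp (c * z))"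
    unfolding c_def by (rule wave_packet_eq_mult_exp)
  then have "(deriv ^^ p) (wave_packet k s) (of_real u) = (deriv ^^ p) (\<lambda>z. wave_packet k 0 z * exp (c * z)) (of_real u)"
    by (simp only:)
  also have "\<dots> = (\<Sum>i=0..p. T i)"
    unfolding T_def e_def
    by (subst higher_deriv_mult[where S=UNIV]) (auto intro!: holomorphic_intros simp: higher_deriv_exp_linear)
  also have "\<dots> = T 0 + (\<Sum>i=1..p. T i)"
    by (simp add: sum.atLeast_Suc_atMost)
  finally have leibniz: "(deriv ^^ p) (wave_packet k s) (of_real u) = T 0 + (\<Sum>i=1..p. T i)" .
  have norm_e: "norm e = 1" by (simp add: e_def c_def norm_exp_eq_Re)
  have norm_c: "norm c = k * \<bar>s\<bar>" using k by (simp add: c_def norm_mult)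
  have T0: "norm (T 0) = exp (- k * u^2 / 2) * (k * \<bar>s\<bar>)^p"
    by (simp add: T_def norm_mult norm_power norm_e norm_c norm_wave_packet_of_real)
  have "norm (T i) \<le> real (p choose i) * (fact i * exp 1 * exp (- k * u^2 / 2) * (k * (1 + \<bar>u\<bar>))^i)
                      * (k * \<bar>s\<bar>)^(p-i)" for i
    using norm_higher_deriv_wave_packet_le[OF k, of i 0 u] k
    by (simp add: T_def norm_mult norm_power norm_e norm_c) (intro mult_right_mono mult_left_mono, auto)
  then have "norm (\<Sum>i=1..p. T i) \<le> (\<Sum>i=1..p. real (p choose i) * (fact i * exp 1 * exp (- k * u^2 / 2)
                                      * (k * (1 + \<bar>u\<bar>))^i) * (k * \<bar>s\<bar>)^(p-i))"
    by (intro order_trans[OF norm_sum sum_mono])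
  then show ?thesis
    using norm_diff_ineq[of "T 0" "\<Sum>i=1..p. T i"] unfolding leibniz T0 by linarith
qed

definition leibniz_tail_const :: "nat \<Rightarrow> real" where
  "leibniz_tail_const p = (\<Sum>i=1..p. real (p choose i) * fact i * exp 1 * 2^i)"

lemma leibniz_tail_const_nonneg: "leibniz_tail_const p \<ge> 0"
  unfolding leibniz_tail_const_def by (intro sum_nonneg) auto

lemma norm_higher_deriv_wave_packet_ge:
  fixes k s u :: real
  assumes k: "k \<ge> 1" and u: "\<bar>u\<bar> \<le> 1" and p: "p \<ge> 1" and s: "\<bar>s\<bar> \<ge> 2 * leibniz_tail_const p + 1"
  shows "exp (- k * u^2 / 2) * k^p * \<bar>s\<bar>^p / 2 \<le> norm ((deriv ^^ p) (wave_packet k s) (of_real u))"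
proof -
  define E where "E = exp (- k * u^2 / 2)"
  have E: "E > 0" by (simp add: E_def)
  have s1: "\<bar>s\<bar> \<ge> 1" using s leibniz_tail_const_nonneg[of p] by linarith
  have "real (p choose i) * (fact i * exp 1 * E * (k * (1 + \<bar>u\<bar>))^i) * (k * \<bar>s\<bar>)^(p-i)
      \<le> E * k^p * (real (p choose i) * fact i * exp 1 * 2^i) * \<bar>s\<bar>^(p-1)" if i: "i \<in> {1..p}" for i
  proof -
    have "(k * (1 + \<bar>u\<bar>))^i * (k * \<bar>s\<bar>)^(p-i) = k^p * ((1 + \<bar>u\<bar>)^i * \<bar>s\<bar>^(p-i))"
      using i by (simp add: power_mult_distrib mult_ac flip: power_add)
    also have "\<dots> \<le> k^p * (2^i * \<bar>s\<bar>^(p-1))"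
      using i s1 u k by (intro mult_left_mono mult_mono power_mono power_increasing) auto
    finally have "(real (p choose i) * fact i * exp 1 * E) * ((k * (1 + \<bar>u\<bar>))^i * (k * \<bar>s\<bar>)^(p-i))
        \<le> (real (p choose i) * fact i * exp 1 * E) * (k^p * (2^i * \<bar>s\<bar>^(p-1)))"
      using E by (intro mult_left_mono) auto
    then show ?thesis by (simp add: mult_ac)
  qed
  then have "(\<Sum>i=1..p. real (p choose i) * (fact i * exp 1 * E * (k * (1 + \<bar>u\<bar>))^i) * (k * \<bar>s\<bar>)^(p-i))
      \<le> E * k^p * leibniz_tail_const p * \<bar>s\<bar>^(p-1)"
    unfolding leibniz_tail_const_def by (force simp: sum_distrib_left sum_distrib_right mult_ac intro: sum_mono)
  also have "\<dots> \<le> E * k^p * (\<bar>s\<bar> / 2) * \<bar>s\<bar>^(p-1)"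
    using s E k by (intro mult_left_mono mult_right_mono) auto
  also have "\<dots> = E * k^p * (\<bar>s\<bar>^p / 2)"
    using p by (cases p) auto
  finally show ?thesis
    using norm_higher_deriv_wave_packet_ge_leibniz[OF k, of u s p]
    by (simp add: E_def power_mult_distrib)
qed

section \<open>Derivatives of \<open>Psi\<close>\<close>

lemma pderiv_dir_tensor_product:
  fixes f :: "'n::finite \<Rightarrow> complex \<Rightarrow> complex" and c :: "real^'n"
  assumes hol: "\<And>i. f i holomorphic_on UNIV"
  shows "pderiv_dir j (\<lambda>x. C * (\<Prod>i\<in>UNIV. f i (of_real (x $ i - c $ i))))
       = (\<lambda>x. C * (\<Prod>i\<in>UNIV. (if i = j then deriv (f i) else f i) (of_real (x $ i - c $ i))))"
proof
  fix x :: "real^'n"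
  define a where "a = x $ j - c $ j"
  define P where "P = (\<Prod>i\<in>UNIV-{j}. f i (of_real (x $ i - c $ i)))"
  have factor_j: "(\<Prod>i\<in>UNIV. g i (of_real (y $ i - c $ i)))
      = g j (of_real (y $ j - c $ j)) * (\<Prod>i\<in>UNIV-{j}. g i (of_real (y $ i - c $ i)))"
    for g :: "'n \<Rightarrow> complex \<Rightarrow> complex" and y :: "real^'n"
    by (subst prod.remove[of UNIV j]) auto
  have line: "C * (\<Prod>i\<in>UNIV. f i (of_real ((x + t *\<^sub>R axis j 1) $ i - c $ i)))
      = C * (f j (of_real (a + t)) * P)" for t
  proof -
    have "(\<Prod>i\<in>UNIV-{j}. f i (of_real ((x + t *\<^sub>R axis j 1) $ i - c $ i))) = P"
      unfolding P_def by (intro prod.cong) (auto simp: axis_def)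
    moreover have "(x + t *\<^sub>R axis j 1) $ j - c $ j = a + t"
      by (simp add: a_def axis_def)
    ultimately show ?thesis by (simp only: factor_j)
  qed
  have "((\<lambda>y. f j (of_real y)) has_vector_derivative deriv (f j) (of_real a)) (at ((\<lambda>t. a + t) 0))"
    by (auto intro!: has_vector_derivative_real_field holomorphic_derivI[OF hol])
  moreover have "((\<lambda>t. a + t) has_vector_derivative 1) (at (0::real))"
    by (auto intro!: derivative_eq_intros)
  ultimately have "((\<lambda>t. f j (of_real (a + t))) has_vector_derivative deriv (f j) (of_real a)) (at 0)"
    using vector_diff_chain_at by (fastforce simp: o_def)
  then have "((\<lambda>t. C * (f j (of_real (a + t)) * P)) has_vector_derivative C * (deriv (f j) (of_real a) * P)) (at 0)"
    by (intro derivative_intros)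
  moreover have "(\<Prod>i\<in>UNIV. (if i = j then deriv (f i) else f i) (of_real (x $ i - c $ i)))
      = deriv (f j) (of_real a) * P"
    unfolding factor_j[of "\<lambda>i. if i = j then deriv (f i) else f i"] a_def P_def
    by (auto intro!: prod.cong)
  ultimately show "pderiv_dir j (\<lambda>x. C * (\<Prod>i\<in>UNIV. f i (of_real (x $ i - c $ i)))) x
      = C * (\<Prod>i\<in>UNIV. (if i = j then deriv (f i) else f i) (of_real (x $ i - c $ i)))"
    unfolding pderiv_dir_def line by (simp add: vector_derivative_at)
qed

definition packet_deriv :: "real \<Rightarrow> real^'n \<Rightarrow> real^'n \<Rightarrow> ('n::finite \<Rightarrow> nat) \<Rightarrow> real^'n \<Rightarrow> complex" where
  "packet_deriv k c xi a x = of_real ((k / pi) powr (real CARD('n) / 4)) *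
     (\<Prod>i\<in>UNIV. (deriv ^^ a i) (wave_packet k (xi $ i)) (of_real (x $ i - c $ i)))"

lemma pderiv_dir_packet_deriv:
  "pderiv_dir j (packet_deriv k c xi a) = packet_deriv k c xi (a(j := Suc (a j)))"
  for c xi :: "real^'n::finite"
proof -
  have "pderiv_dir j (packet_deriv k c xi a)
      = (\<lambda>x. of_real ((k / pi) powr (real CARD('n) / 4)) * (\<Prod>i\<in>UNIV.
           (if i = j then deriv ((deriv ^^ a i) (wave_packet k (xi $ i))) else (deriv ^^ a i) (wave_packet k (xi $ i)))
           (of_real (x $ i - c $ i))))"
    unfolding packet_deriv_def[abs_def]
    by (rule pderiv_dir_tensor_product) (auto intro!: holomorphic_intros)
  also have "\<dots> = packet_deriv k c xi (a(j := Suc (a j)))"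
    by (auto simp: fun_eq_iff packet_deriv_def intro!: prod.cong)
  finally show ?thesis .
qed

lemma fold_pderiv_dir_packet_deriv:
  "fold pderiv_dir L (packet_deriv k c xi a) = packet_deriv k c xi (\<lambda>i. a i + count (mset L) i)"
proof (induction L arbitrary: a)
  case (Cons j L)
  have "(\<lambda>i. (a(j := Suc (a j))) i + count (mset L) i) = (\<lambda>i. a i + count (mset (j # L)) i)"
    by (auto simp: fun_eq_iff)
  with Cons.IH show ?case by (simp add: pderiv_dir_packet_deriv)
qed simp

lemma mi_deriv_packet_deriv: "mi_deriv a (packet_deriv k c xi (\<lambda>_. 0)) = packet_deriv k c xi a"
proof -
  define M where "M = (\<Sum>i\<in>UNIV. replicate_mset (a i) i)"
  have "mset (SOME L. mset L = M) = M" by (rule someI_ex) (rule ex_mset)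
  moreover have "count M i = a i" for i
    unfolding M_def count_sum by (simp add: sum.delta)
  ultimately show ?thesis
    unfolding mi_deriv_def M_def[symmetric] by (simp add: fold_pderiv_dir_packet_deriv)
qed

lemma norm_sq_vec_eq_sum: "(norm (u::real^'n::finite))^2 = (\<Sum>i\<in>UNIV. (u $ i)^2)"
  unfolding power2_norm_eq_inner by (simp add: inner_vec_def power2_eq_square)

lemma prod_exp_neg_sq_components:
  "(\<Prod>i\<in>UNIV. exp (- k * (u $ i)^2 / 2)) = exp (- k * (norm (u::real^'n::finite))^2 / 2)"
  by (simp add: exp_sum[symmetric] norm_sq_vec_eq_sum sum_distrib_left sum_divide_distrib)

lemma Psi_eq_packet_deriv:
  fixes m n :: "int^'n::finite"
  shows "Psi k m n = packet_deriv k (lattice_pt k m) (lattice_pt k n) (\<lambda>_. 0)"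
proof
  fix x :: "real^'n"
  define u where "u = x - lattice_pt k m"
  define xi where "xi = lattice_pt k n"
  have "(\<Prod>i\<in>UNIV. wave_packet k (xi $ i) (of_real (u $ i)))
      = exp (\<Sum>i\<in>UNIV. of_real (- (k / 2) * (u $ i * u $ i)) + \<i> * of_real (k * (u $ i * xi $ i)))"
    by (simp add: wave_packet_def exp_sum power2_eq_square algebra_simps)
  also have "\<dots> = exp (of_real (- (k / 2) * (norm u)\<^sup>2) + \<i> * of_real (k * (u \<bullet> xi)))"
    by (simp add: sum.distrib sum_subtractf sum_distrib_left sum_negf sum_divide_distrib
        power2_norm_eq_inner inner_vec_def)
  also have "\<dots> = of_real (exp (- (k / 2) * (norm u)\<^sup>2)) * cis (k * (u \<bullet> xi))"
    by (simp only: exp_add cis_conv_exp exp_of_real)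
  finally show "Psi k m n x = packet_deriv k (lattice_pt k m) (lattice_pt k n) (\<lambda>_. 0) x"
    by (simp add: Psi_def packet_deriv_def u_def xi_def mult.assoc)
qed

lemma norm_packet_deriv:
  "cmod (packet_deriv k c xi a x) = (k / pi) powr (real CARD('n) / 4) *
     (\<Prod>i\<in>UNIV. cmod ((deriv ^^ a i) (wave_packet k (xi $ i)) (of_real (x $ i - c $ i))))"
  for c xi :: "real^'n::finite"
  unfolding packet_deriv_def by (simp add: norm_mult prod_norm)

lemma norm_packet_deriv_0:
  "cmod (packet_deriv k c xi (\<lambda>_. 0) x) = (k / pi) powr (real CARD('n) / 4) * exp (- k * (norm (x - c))^2 / 2)"
  for c xi :: "real^'n::finite"
  using prod_exp_neg_sq_components[of k "x - c"]
  by (simp add: norm_packet_deriv norm_wave_packet_of_real del: of_real_diff)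

lemma packet_normalization_sq:
  assumes "k > 0"
  shows "((k / pi) powr (real n / 4))^2 = sqrt (k / pi) ^ n"
proof -
  have "((k / pi) powr (real n / 4))^2 = (k / pi) powr (real n * (1/2))"
    using assms by (simp add: powr_power)
  also have "\<dots> = ((k / pi) powr (1/2)) ^ n"
    using assms by (intro powr_power[symmetric]) simp
  finally show ?thesis
    using assms by (simp add: powr_half_sqrt)
qed

lemma borel_measurable_weighted_packet_deriv [measurable]:
  fixes c xi :: "real^'n::finite"
  shows "(\<lambda>x. complex_of_real (norm x ^ q) * packet_deriv k c xi a x) \<in> borel_measurable lborel"
proof -
  have "continuous_on UNIV (\<lambda>x::real^'n. (deriv ^^ a i) (wave_packet k (xi $ i)) (of_real (x $ i - c $ i)))" for i
    by (rule continuous_on_compose2[of UNIV "(deriv ^^ a i) (wave_packet k (xi $ i))"])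
      (auto intro!: holomorphic_on_imp_continuous_on holomorphic_intros continuous_intros)
  then have "continuous_on UNIV (\<lambda>x. complex_of_real (norm x ^ q) * packet_deriv k c xi a x)"
    unfolding packet_deriv_def by (intro continuous_intros) auto
  then show ?thesis by (simp add: borel_measurable_continuous_onI)
qed

section \<open>The weighted Sobolev norm\<close>

lemma le_mi_order: "a i \<le> mi_order a"
  unfolding mi_order_def by (rule member_le_sum) auto

lemma mi_order_0: "mi_order (\<lambda>_. 0) = 0"
  by (simp add: mi_order_def)

lemma finite_mi_order_le: "finite {a::'n::finite \<Rightarrow> nat. mi_order a \<le> p}"
proof (rule finite_subset)
  show "{a::'n \<Rightarrow> nat. mi_order a \<le> p} \<subseteq> Pi\<^sub>E UNIV (\<lambda>_. {0..p})"
    using le_mi_order order_trans by (fastforce simp: PiE_UNIV_domain)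
qed (rule finite_PiE; simp)

lemma Hhat_norm_sq_term_le:
  assumes "mi_order a + q \<le> p"
  shows "k powr (- 2 * real (mi_order a)) * L2_norm_sq (\<lambda>x. of_real (norm x ^ q) * mi_deriv a v x)
    \<le> Hhat_norm_sq p k v"
proof -
  let ?t = "\<lambda>a q. k powr (- 2 * real (mi_order a)) * L2_norm_sq (\<lambda>x. of_real (norm x ^ q) * mi_deriv a v x)"
  have "?t a q \<le> (\<Sum>q\<in>{0..p - mi_order a}. ?t a q)"
    using assms by (intro member_le_sum) (auto intro!: mult_nonneg_nonneg L2_norm_sq_nonneg)
  also have "\<dots> \<le> Hhat_norm_sq p k v"
    unfolding Hhat_norm_sq_def using assms finite_mi_order_le
    by (intro member_le_sum[of a]) (auto intro!: sum_nonneg mult_nonneg_nonneg L2_norm_sq_nonneg)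
  finally show ?thesis .
qed

lemma Hhat_norm_sq_le:
  fixes v :: "real^'n::finite \<Rightarrow> complex"
  assumes le: "\<And>a q. mi_order a + q \<le> p \<Longrightarrow>
    k powr (- 2 * real (mi_order a)) * L2_norm_sq (\<lambda>x. of_real (norm x ^ q) * mi_deriv a v x) \<le> B"
  shows "Hhat_norm_sq p k v \<le> real (card {a::'n \<Rightarrow> nat. mi_order a \<le> p}) * real (p + 1) * B"
proof -
  have "0 \<le> k powr (- 2 * real (mi_order (\<lambda>_::'n. 0 :: nat))) *
      L2_norm_sq (\<lambda>x. of_real (norm x ^ 0) * mi_deriv (\<lambda>_::'n. 0 :: nat) v x)"
    by (intro mult_nonneg_nonneg L2_norm_sq_nonneg) simp
  also have "\<dots> \<le> B" by (rule le) (simp add: mi_order_0)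
  finally have B: "B \<ge> 0" .
  have "Hhat_norm_sq p k v \<le> (\<Sum>a::'n \<Rightarrow> nat | mi_order a \<le> p. \<Sum>q\<in>{0..p - mi_order a}. B)"
    unfolding Hhat_norm_sq_def by (intro sum_mono le) auto
  also have "\<dots> \<le> (\<Sum>a::'n \<Rightarrow> nat | mi_order a \<le> p. real (p + 1) * B)"
    using B by (intro sum_mono) (auto intro!: mult_right_mono)
  finally show ?thesis by simp
qed

section \<open>Upper bound\<close>

lemma one_add_power_mult_exp_le:
  fixes k y :: real
  assumes k: "k \<ge> 1" and y: "y \<ge> 0"
  shows "(1 + y)^(2*p) * exp (- k * y^2 / 2) \<le> exp (2 * real p ^ 2)"
proof -
  define w where "w = sqrt k * y"
  have w_sq: "w^2 = k * y^2" using k by (simp add: w_def power_mult_distrib)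
  have "y \<le> w" using k y mult_right_mono[of 1 "sqrt k" y] by (simp add: w_def)
  then have "1 + y \<le> exp w"
    using exp_ge_add_one_self[of w] by linarith
  then have "(1 + y)^(2*p) \<le> exp w ^ (2*p)"
    using y by (intro power_mono) auto
  also have "\<dots> = exp (real (2*p) * w)" by (rule exp_of_nat_mult[symmetric])
  finally have "(1 + y)^(2*p) * exp (- k * y^2 / 2) \<le> exp (real (2*p) * w) * exp (- k * y^2 / 2)"
    by (rule mult_right_mono) simp
  also have "\<dots> = exp (real (2*p) * w - w^2 / 2)"
    by (simp add: w_sq flip: exp_add)
  also have "\<dots> \<le> exp (2 * real p ^ 2)"
  proof -
    have "0 \<le> (w - 2 * real p)^2 / 2" by simp
    then show ?thesis by (simp add: power2_eq_square algebra_simps)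
  qed
  finally show ?thesis .
qed

lemma norm_packet_deriv_le:
  fixes c xi x :: "real^'n::finite"
  assumes k: "k \<ge> 1"
  shows "cmod (packet_deriv k c xi a x) \<le> (k / pi) powr (real CARD('n) / 4) * (\<Prod>i\<in>UNIV. fact (a i) * exp 1)
      * (k * (1 + norm (x - c) + norm xi)) ^ mi_order a * exp (- k * (norm (x - c))^2 / 2)"
proof -
  define u where "u = x - c"
  define X where "X = k * (1 + norm u + norm xi)"
  have "(\<Prod>i\<in>UNIV. cmod ((deriv ^^ a i) (wave_packet k (xi $ i)) (of_real (x $ i - c $ i))))
      \<le> (\<Prod>i\<in>UNIV. (fact (a i) * exp 1) * exp (- k * (u $ i)^2 / 2) * X ^ a i)"
  proof (rule prod_mono, safe)
    fix i
    have "cmod ((deriv ^^ a i) (wave_packet k (xi $ i)) (of_real (u $ i)))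
        \<le> fact (a i) * exp 1 * exp (- k * (u $ i)^2 / 2) * (k * (1 + \<bar>u $ i\<bar> + \<bar>xi $ i\<bar>)) ^ a i"
      by (rule norm_higher_deriv_wave_packet_le[OF k])
    also have "\<dots> \<le> fact (a i) * exp 1 * exp (- k * (u $ i)^2 / 2) * X ^ a i"
      unfolding X_def using k component_le_norm_cart[of u i] component_le_norm_cart[of xi i]
      by (intro mult_left_mono power_mono) auto
    finally show "cmod ((deriv ^^ a i) (wave_packet k (xi $ i)) (of_real (x $ i - c $ i)))
        \<le> (fact (a i) * exp 1) * exp (- k * (u $ i)^2 / 2) * X ^ a i" by (simp add: u_def)
  qed simp
  also have "\<dots> = (\<Prod>i\<in>UNIV. fact (a i) * exp 1) * (\<Prod>i\<in>UNIV. exp (- k * (u $ i)^2 / 2)) * (\<Prod>i\<in>UNIV. X ^ a i)"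
    by (simp add: prod.distrib)
  also have "\<dots> = (\<Prod>i\<in>UNIV. fact (a i) * exp 1) * exp (- k * (norm u)^2 / 2) * X ^ mi_order a"
    unfolding prod_exp_neg_sq_components by (simp add: mi_order_def power_sum)
  finally have "(\<Prod>i\<in>UNIV. cmod ((deriv ^^ a i) (wave_packet k (xi $ i)) (of_real (x $ i - c $ i))))
      \<le> (\<Prod>i\<in>UNIV. fact (a i) * exp 1) * exp (- k * (norm u)^2 / 2) * X ^ mi_order a" .
  from mult_left_mono[OF this, of "(k / pi) powr (real CARD('n) / 4)"] show ?thesis
    unfolding norm_packet_deriv by (simp add: X_def u_def mult_ac)
qed

lemma norm_power_mult_power_le:
  fixes x c xi :: "'a::real_normed_vector"
  assumes "q + j \<le> p"
  shows "norm x ^ q * (1 + norm (x - c) + norm xi) ^ j \<le> ((1 + norm c + norm xi) * (1 + norm (x - c))) ^ p"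
proof -
  define u W where "u = norm (x - c)" and "W = 1 + norm c + norm xi"
  have "u \<ge> 0" "W \<ge> 1" by (simp_all add: u_def W_def)
  have "norm x \<le> W * (1 + u)" and "1 + u + norm xi \<le> W * (1 + u)"
  proof -
    have "u \<le> W * u" using mult_right_mono[of 1 W u] \<open>u \<ge> 0\<close> \<open>W \<ge> 1\<close> by simp
    moreover have "W * (1 + u) = W + W * u" by (simp add: algebra_simps)
    moreover have "norm x \<le> norm c + u" using norm_triangle_ineq[of c "x - c"] by (simp add: u_def)
    ultimately show "norm x \<le> W * (1 + u)" and "1 + u + norm xi \<le> W * (1 + u)"
      using W_def norm_ge_zero[of c] norm_ge_zero[of xi] by linarith+
  qed
  then have "norm x ^ q * (1 + u + norm xi) ^ j \<le> (W * (1 + u)) ^ q * (W * (1 + u)) ^ j"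
    using \<open>u \<ge> 0\<close> \<open>W \<ge> 1\<close> by (intro mult_mono power_mono) auto
  also have "\<dots> \<le> (W * (1 + u)) ^ p"
    unfolding power_add[symmetric] using assms mult_mono[of 1 W 1 "1 + u"] \<open>u \<ge> 0\<close> \<open>W \<ge> 1\<close>
    by (intro power_increasing) auto
  finally show ?thesis by (simp add: u_def W_def)
qed

lemma norm_weighted_packet_deriv_sq_le:
  fixes c xi x :: "real^'n::finite"
  assumes k: "k \<ge> 1" and order: "mi_order a + q \<le> p"
  shows "(cmod (of_real (norm x ^ q) * packet_deriv k c xi a x))^2
    \<le> k^(2 * mi_order a) * (1 + norm c + norm xi)^(2*p) * ((fact p * exp 1)^(2 * CARD('n)) * exp (2 * real p ^ 2))
      * (sqrt (k / pi) ^ CARD('n) * exp (- (k * norm (x - c) ^ 2) / 2))"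
proof -
  define u W A M Mp E where "u = norm (x - c)" and "W = 1 + norm c + norm xi"
    and "A = (k / pi) powr (real CARD('n) / 4)" and "M = (\<Prod>i\<in>UNIV. fact (a i) * exp 1 :: real)"
    and "Mp = (fact p * exp 1 :: real) ^ CARD('n)" and "E = exp (- k * u^2 / 2)"
  have nonneg: "u \<ge> 0" "W \<ge> 1" "A \<ge> 0" "M \<ge> 0" "E \<ge> 0" "k \<ge> 0"
    using k by (auto simp: u_def W_def A_def M_def E_def intro: prod_nonneg)
  have "a i \<le> p" for i using le_mi_order[of a i] order by linarith
  then have "M \<le> Mp"
    unfolding M_def Mp_def
    by (subst prod_constant[symmetric], intro prod_mono) (auto intro!: fact_mono)
  have weight: "norm x ^ q * (1 + u + norm xi) ^ mi_order a \<le> (W * (1 + u)) ^ p"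
    unfolding u_def W_def by (rule norm_power_mult_power_le) (use order in simp)
  have "norm x ^ q * cmod (packet_deriv k c xi a x)
      \<le> norm x ^ q * (A * M * (k * (1 + u + norm xi)) ^ mi_order a * E)"
    using norm_packet_deriv_le[OF k, of c xi a x] by (intro mult_left_mono) (simp_all add: A_def M_def u_def E_def)
  also have "\<dots> = A * M * k ^ mi_order a * E * (norm x ^ q * (1 + u + norm xi) ^ mi_order a)"
    by (simp add: power_mult_distrib mult_ac)
  also have "\<dots> \<le> A * Mp * k ^ mi_order a * E * (W * (1 + u)) ^ p"
    using nonneg \<open>M \<le> Mp\<close> weight by (intro mult_mono) auto
  finally have "(norm x ^ q * cmod (packet_deriv k c xi a x))^2 \<le> (A * Mp * k ^ mi_order a * E * (W * (1 + u)) ^ p)^2"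
    by (intro power_mono) auto
  also have "\<dots> = k^(2 * mi_order a) * W^(2*p) * Mp^2 * A^2 * E * ((1 + u)^(2*p) * E)"
    unfolding power_mult by (simp add: power_mult_distrib power2_eq_square mult_ac)
  also have "\<dots> \<le> k^(2 * mi_order a) * W^(2*p) * Mp^2 * A^2 * E * exp (2 * real p ^ 2)"
    using one_add_power_mult_exp_le[OF k nonneg(1)] nonneg by (intro mult_left_mono) (auto simp: E_def)
  finally show ?thesis
    using packet_normalization_sq[of k "CARD('n)"] k
    by (simp add: norm_mult norm_power A_def Mp_def E_def u_def W_def power_mult mult_ac)
qed

definition packet_L2_bound :: "nat \<Rightarrow> nat \<Rightarrow> real" where
  "packet_L2_bound d p = (fact p * exp 1)^(2 * d) * exp (2 * real p ^ 2) * sqrt 2 ^ d"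

lemma packet_L2_bound_pos: "packet_L2_bound d p > 0"
  unfolding packet_L2_bound_def by simp

lemma nn_integral_weighted_packet_deriv_le:
  fixes c xi :: "real^'n::finite"
  assumes k: "k \<ge> 1" and "mi_order a + q \<le> p"
  shows "(\<integral>\<^sup>+x. ennreal ((cmod (of_real (norm x ^ q) * packet_deriv k c xi a x))^2) \<partial>lborel)
     \<le> ennreal (k^(2 * mi_order a) * (1 + norm c + norm xi)^(2*p) * packet_L2_bound CARD('n) p)"
proof -
  define K where "K = k^(2 * mi_order a) * (1 + norm c + norm xi)^(2*p)
    * ((fact p * exp 1)^(2 * CARD('n)) * exp (2 * real p ^ 2)) * sqrt (k / pi) ^ CARD('n)"
  have K: "K \<ge> 0" using k by (simp add: K_def)
  have "(\<integral>\<^sup>+x. ennreal ((cmod (of_real (norm x ^ q) * packet_deriv k c xi a x))^2) \<partial>lborel)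
     \<le> (\<integral>\<^sup>+x. ennreal K * ennreal (exp (- (k * norm (x - c) ^ 2) / 2)) \<partial>lborel)"
  proof (rule nn_integral_mono)
    fix x
    have "(cmod (of_real (norm x ^ q) * packet_deriv k c xi a x))^2 \<le> K * exp (- (k * norm (x - c) ^ 2) / 2)"
      using norm_weighted_packet_deriv_sq_le[OF assms, of x c xi] by (simp add: K_def mult.assoc)
    then show "ennreal ((cmod (of_real (norm x ^ q) * packet_deriv k c xi a x))^2)
        \<le> ennreal K * ennreal (exp (- (k * norm (x - c) ^ 2) / 2))"
      using K by (subst ennreal_mult[symmetric]) (auto intro!: ennreal_leI)
  qed
  also have "\<dots> = ennreal K * (\<integral>\<^sup>+x. ennreal (exp (- (k * norm (x - c) ^ 2) / 2)) \<partial>lborel)"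
    by (rule nn_integral_cmult) measurable
  also have "\<dots> = ennreal K * ennreal (sqrt (2 * pi / k) ^ CARD('n))"
    using k by (subst nn_integral_gaussian_scaled) auto
  also have "\<dots> = ennreal (K * sqrt (2 * pi / k) ^ CARD('n))"
    using K k by (intro ennreal_mult[symmetric]) auto
  also have "K * sqrt (2 * pi / k) ^ CARD('n) = k^(2 * mi_order a) * (1 + norm c + norm xi)^(2*p) * packet_L2_bound CARD('n) p"
  proof -
    have "(k / pi) * (2 * pi / k) = 2" using k by (simp add: field_simps)
    then have "sqrt (k / pi) ^ CARD('n) * sqrt (2 * pi / k) ^ CARD('n) = sqrt 2 ^ CARD('n)"
      by (simp add: power_mult_distrib[symmetric] real_sqrt_mult[symmetric])
    then show ?thesis
      unfolding K_def packet_L2_bound_def by (simp only: mult.assoc)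
  qed
  finally show ?thesis .
qed

lemma powr_neg_mult_power_cancel: "k > 0 \<Longrightarrow> k powr (- 2 * real j) * k ^ (2 * j) = 1"
  for k :: real
  by (simp add: powr_minus powr_realpow[symmetric] field_simps)

lemma L2_weighted_packet_deriv_le:
  fixes c xi :: "real^'n::finite"
  assumes k: "k \<ge> 1" and "mi_order a + q \<le> p"
  shows "k powr (- 2 * real (mi_order a)) * L2_norm_sq (\<lambda>x. of_real (norm x ^ q) * packet_deriv k c xi a x)
    \<le> (1 + norm c + norm xi)^(2*p) * packet_L2_bound CARD('n) p"
proof -
  have "L2_norm_sq (\<lambda>x. of_real (norm x ^ q) * packet_deriv k c xi a x)
      \<le> k^(2 * mi_order a) * (1 + norm c + norm xi)^(2*p) * packet_L2_bound CARD('n) p"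
    using k packet_L2_bound_pos[of "CARD('n)" p]
    by (intro L2_norm_sq_le borel_measurable_weighted_packet_deriv nn_integral_weighted_packet_deriv_le[OF assms])
      simp
  then have "k powr (- 2 * real (mi_order a)) * L2_norm_sq (\<lambda>x. of_real (norm x ^ q) * packet_deriv k c xi a x)
      \<le> k powr (- 2 * real (mi_order a)) * (k^(2 * mi_order a) * (1 + norm c + norm xi)^(2*p) * packet_L2_bound CARD('n) p)"
    by (rule mult_left_mono) simp
  also have "\<dots> = (k powr (- 2 * real (mi_order a)) * k^(2 * mi_order a)) * ((1 + norm c + norm xi)^(2*p) * packet_L2_bound CARD('n) p)"
    by (simp only: mult.assoc)
  also have "k powr (- 2 * real (mi_order a)) * k^(2 * mi_order a) = 1"
    using k by (intro powr_neg_mult_power_cancel) simp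
  finally show ?thesis by simp
qed

lemma sq_one_add_add_le: "(1 + a + b)^2 \<le> 3 * (1 + a^2 + b^2)" for a b :: real
proof -
  have "0 \<le> (1 - a)^2 + (1 - b)^2 + (a - b)^2" by simp
  then show ?thesis by (simp add: power2_eq_square algebra_simps)
qed

lemma Hhat_norm_sq_packet_le:
  fixes c xi :: "real^'n::finite"
  assumes k: "k \<ge> 1"
  shows "Hhat_norm_sq p k (packet_deriv k c xi (\<lambda>_. 0))
    \<le> real (card {a::'n \<Rightarrow> nat. mi_order a \<le> p}) * real (p + 1) * packet_L2_bound CARD('n) p * 3^p
       * (1 + (norm c)\<^sup>2 + (norm xi)\<^sup>2) ^ p"
proof -
  have "Hhat_norm_sq p k (packet_deriv k c xi (\<lambda>_. 0))
      \<le> real (card {a::'n \<Rightarrow> nat. mi_order a \<le> p}) * real (p + 1) * ((1 + norm c + norm xi)^(2*p) * packet_L2_bound CARD('n) p)"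
    using L2_weighted_packet_deriv_le[OF k] by (intro Hhat_norm_sq_le) (simp add: mi_deriv_packet_deriv)
  also have "\<dots> \<le> real (card {a::'n \<Rightarrow> nat. mi_order a \<le> p}) * real (p + 1) * (3^p * (1 + (norm c)\<^sup>2 + (norm xi)\<^sup>2) ^ p * packet_L2_bound CARD('n) p)"
  proof (intro mult_left_mono mult_right_mono)
    show "(1 + norm c + norm xi)^(2*p) \<le> 3^p * (1 + (norm c)\<^sup>2 + (norm xi)\<^sup>2) ^ p"
      unfolding power_mult power_mult_distrib[symmetric] by (intro power_mono sq_one_add_add_le) simp
  qed (use packet_L2_bound_pos[of "CARD('n)" p] in auto)
  finally show ?thesis by (simp add: mult_ac)
qed

section \<open>Lower bound\<close>

text \<open>A lower bound for the integral of \<open>|packet_deriv k c xi (\<lambda>_. 0)|\<^sup>2\<close> over the ball of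
  radius \<open>1 / sqrt k\<close> about \<open>c\<close>, uniform in \<open>k\<close>.\<close>

definition gaussian_ball_mass :: "nat \<Rightarrow> real" where
  "gaussian_ball_mass d = exp (-1) * unit_ball_vol (real d) / sqrt pi ^ d"

lemma gaussian_ball_mass_pos: "gaussian_ball_mass d > 0"
  unfolding gaussian_ball_mass_def by simp

lemma norm_packet_deriv_0_ge_near_center:
  fixes c xi x :: "real^'n::finite"
  assumes k: "k \<ge> 1" and near: "norm (x - c) < 1 / sqrt k"
  shows "(k / pi) powr (real CARD('n) / 4) * exp (- 1 / 2) \<le> cmod (packet_deriv k c xi (\<lambda>_. 0) x)"
proof -
  have "(norm (x - c))^2 \<le> (1 / sqrt k)^2" using near by (intro power_mono) auto
  then have "k * (norm (x - c))^2 \<le> 1" using k by (simp add: power_divide field_simps)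
  then show ?thesis unfolding norm_packet_deriv_0 by (intro mult_left_mono) auto
qed

lemma L2_weighted_packet_deriv_ge:
  fixes c xi :: "real^'n::finite"
  assumes k: "k \<ge> 1" and order: "mi_order a + q \<le> p" and L: "L \<ge> 0"
    and ge: "\<And>x. norm (x - c) < 1 / sqrt k \<Longrightarrow>
      L * cmod (packet_deriv k c xi (\<lambda>_. 0) x) \<le> norm x ^ q * cmod (packet_deriv k c xi a x)"
  shows "L^2 * gaussian_ball_mass CARD('n) \<le> L2_norm_sq (\<lambda>x. of_real (norm x ^ q) * packet_deriv k c xi a x)"
proof -
  define r where "r = 1 / sqrt k"
  define \<gamma> where "\<gamma> = L^2 * (sqrt (k / pi) ^ CARD('n) * exp (-1))"
  have r: "r \<ge> 0" and \<gamma>: "\<gamma> \<ge> 0" using k by (simp_all add: r_def \<gamma>_def)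
  have "\<gamma> \<le> (cmod (of_real (norm x ^ q) * packet_deriv k c xi a x))^2" if "x \<in> ball c r" for x
  proof -
    have near: "norm (x - c) < 1 / sqrt k" using that by (simp add: r_def dist_norm norm_minus_commute)
    have "L * ((k / pi) powr (real CARD('n) / 4) * exp (- 1 / 2)) \<le> L * cmod (packet_deriv k c xi (\<lambda>_. 0) x)"
      using norm_packet_deriv_0_ge_near_center[OF k near] L by (rule mult_left_mono)
    also have "\<dots> \<le> norm x ^ q * cmod (packet_deriv k c xi a x)" by (rule ge[OF near])
    finally have "(L * ((k / pi) powr (real CARD('n) / 4) * exp (- 1 / 2)))^2
        \<le> (norm x ^ q * cmod (packet_deriv k c xi a x))^2"
      using L by (intro power_mono) auto
    moreover have "(exp (- 1 / 2) :: real)^2 = exp (-1)"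
      by (simp add: power2_eq_square flip: exp_add)
    ultimately show ?thesis
      using packet_normalization_sq[of k "CARD('n)"] k
      by (simp add: \<gamma>_def norm_mult norm_power power_mult_distrib mult_ac)
  qed
  then have "ennreal (\<gamma> * (unit_ball_vol (real DIM(real^'n)) * r ^ DIM(real^'n)))
      \<le> (\<integral>\<^sup>+x. ennreal ((cmod (of_real (norm x ^ q) * packet_deriv k c xi a x))^2) \<partial>lborel)"
    using borel_measurable_weighted_packet_deriv[of q k c xi a]
    by (intro nn_integral_ge_on_ball[OF _ r \<gamma>]) (measurable, auto)
  moreover have "\<gamma> * (unit_ball_vol (real DIM(real^'n)) * r ^ DIM(real^'n)) = L^2 * gaussian_ball_mass CARD('n)"
  proof -
    have "sqrt (k / pi) * r = 1 / sqrt pi"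
      using k by (simp add: r_def real_sqrt_divide)
    then have "sqrt (k / pi) ^ CARD('n) * r ^ CARD('n) = 1 / sqrt pi ^ CARD('n)"
      by (simp add: power_one_over flip: power_mult_distrib)
    then show ?thesis
      unfolding \<gamma>_def gaussian_ball_mass_def by (simp add: field_simps)
  qed
  moreover have "(\<integral>\<^sup>+x. ennreal ((cmod (of_real (norm x ^ q) * packet_deriv k c xi a x))^2) \<partial>lborel) < \<infinity>"
    using nn_integral_weighted_packet_deriv_le[OF k order, of c xi] by (rule order.strict_trans1) simp
  ultimately show ?thesis
    using L gaussian_ball_mass_pos[of "CARD('n)"]
    by (intro L2_norm_sq_ge[OF borel_measurable_weighted_packet_deriv]) auto
qed

lemma norm_packet_deriv_ge:
  fixes c xi x :: "real^'n::finite"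
  assumes k: "k \<ge> 1" and p: "p \<ge> 1" and near: "\<bar>x $ i - c $ i\<bar> \<le> 1"
    and large: "\<bar>xi $ i\<bar> \<ge> 2 * leibniz_tail_const p + 1"
  shows "k^p * \<bar>xi $ i\<bar>^p / 2 * cmod (packet_deriv k c xi (\<lambda>_. 0) x)
    \<le> cmod (packet_deriv k c xi (\<lambda>j. if j = i then p else 0) x)"
proof -
  define L where "L = k^p * \<bar>xi $ i\<bar>^p / 2"
  define a where "a = (\<lambda>j::'n. if j = i then p else 0)"
  have L: "L \<ge> 0" using k by (simp add: L_def)
  have "(\<Prod>j\<in>UNIV. (if j = i then L else 1) * cmod (wave_packet k (xi $ j) (of_real (x $ j - c $ j))))
      \<le> (\<Prod>j\<in>UNIV. cmod ((deriv ^^ a j) (wave_packet k (xi $ j)) (of_real (x $ j - c $ j))))"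
  proof (rule prod_mono, safe)
    fix j
    show "0 \<le> (if j = i then L else 1) * cmod (wave_packet k (xi $ j) (of_real (x $ j - c $ j)))"
      using L by simp
    show "(if j = i then L else 1) * cmod (wave_packet k (xi $ j) (of_real (x $ j - c $ j)))
        \<le> cmod ((deriv ^^ a j) (wave_packet k (xi $ j)) (of_real (x $ j - c $ j)))"
      using norm_higher_deriv_wave_packet_ge[OF k near p large]
      by (auto simp: a_def L_def norm_wave_packet_of_real mult_ac simp del: of_real_diff)
  qed
  also have "(\<Prod>j\<in>UNIV. (if j = i then L else 1) * cmod (wave_packet k (xi $ j) (of_real (x $ j - c $ j))))
      = L * (\<Prod>j\<in>UNIV. cmod (wave_packet k (xi $ j) (of_real (x $ j - c $ j))))"
    by (simp add: prod.distrib)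
  finally have "L * (\<Prod>j\<in>UNIV. cmod (wave_packet k (xi $ j) (of_real (x $ j - c $ j))))
      \<le> (\<Prod>j\<in>UNIV. cmod ((deriv ^^ a j) (wave_packet k (xi $ j)) (of_real (x $ j - c $ j))))" .
  from mult_left_mono[OF this, of "(k / pi) powr (real CARD('n) / 4)"] show ?thesis
    unfolding norm_packet_deriv a_def[symmetric] L_def[symmetric] by (simp add: mult_ac)
qed

lemma Hhat_norm_sq_packet_term_le:
  fixes c xi :: "real^'n::finite"
  assumes "mi_order a + q \<le> p"
  shows "k powr (- 2 * real (mi_order a)) * L2_norm_sq (\<lambda>x. of_real (norm x ^ q) * packet_deriv k c xi a x)
    \<le> Hhat_norm_sq p k (packet_deriv k c xi (\<lambda>_. 0))"
  using Hhat_norm_sq_term_le[OF assms, of k "packet_deriv k c xi (\<lambda>_. 0)"] by (simp add: mi_deriv_packet_deriv)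

lemma Hhat_norm_sq_packet_ge_mass:
  fixes c xi :: "real^'n::finite"
  assumes k: "k \<ge> 1"
  shows "gaussian_ball_mass CARD('n) \<le> Hhat_norm_sq p k (packet_deriv k c xi (\<lambda>_. 0))"
proof -
  have "1^2 * gaussian_ball_mass CARD('n) \<le> L2_norm_sq (\<lambda>x. of_real (norm x ^ 0) * packet_deriv k c xi (\<lambda>_. 0) x)"
    by (rule L2_weighted_packet_deriv_ge[OF k]) (auto simp: mi_order_0)
  also have "\<dots> \<le> Hhat_norm_sq p k (packet_deriv k c xi (\<lambda>_. 0))"
    using Hhat_norm_sq_packet_term_le[of "\<lambda>_. 0" 0 p k c xi] k by (simp add: mi_order_0)
  finally show ?thesis by simp
qed

lemma mult_power_le_of_large:
  fixes b H t T C :: real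
  assumes "0 \<le> b" "b \<le> H" "0 \<le> t" "0 \<le> T" "0 \<le> C"
    and large: "T \<le> t \<Longrightarrow> b * t ^ n \<le> C * H"
  shows "b * t ^ n \<le> (C + T ^ n) * H"
proof (cases "T \<le> t")
  case True
  have "0 \<le> T ^ n * H" using assms by simp
  then show ?thesis using large[OF True] by (simp add: algebra_simps)
next
  case False
  then have "b * t ^ n \<le> H * T ^ n" using assms by (intro mult_mono power_mono) auto
  moreover have "0 \<le> C * H" using assms by simp
  ultimately show ?thesis by (simp add: algebra_simps)
qed

lemma exists_component_norm_sq_le: "\<exists>i. (norm x)^2 \<le> real CARD('n) * (x $ i)^2"
  for x :: "real^'n::finite"
proof -
  have "Max (range (\<lambda>j. (x $ j)^2)) \<in> range (\<lambda>j. (x $ j)^2)"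
    by (rule Max_in) auto
  then obtain i where i: "Max (range (\<lambda>j. (x $ j)^2)) = (x $ i)^2" by blast
  have "(norm x)^2 = (\<Sum>j\<in>UNIV. (x $ j)^2)" by (rule norm_sq_vec_eq_sum)
  also have "\<dots> \<le> real CARD('n) * (x $ i)^2"
    unfolding i[symmetric] by (rule sum_bounded_above) simp
  finally show ?thesis ..
qed

lemma one_add_add_power_le:
  fixes a b :: real
  assumes "a \<ge> 0" "b \<ge> 0"
  shows "(1 + a + b)^p \<le> 3^p * (1 + a^p + b^p)"
proof -
  define m where "m = max 1 (max a b)"
  have "(1 + a + b)^p \<le> (3 * m)^p"
    using assms by (intro power_mono) (auto simp: m_def)
  also have "\<dots> \<le> 3^p * (1 + a^p + b^p)"
    unfolding power_mult_distrib using assms by (intro mult_left_mono) (auto simp: m_def max_def)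
  finally show ?thesis .
qed

lemma Hhat_norm_sq_packet_ge_center:
  fixes c xi :: "real^'n::finite"
  assumes k: "k \<ge> 1"
  shows "gaussian_ball_mass CARD('n) * ((norm c)\<^sup>2)^p
    \<le> (4^p + 4^p) * Hhat_norm_sq p k (packet_deriv k c xi (\<lambda>_. 0))"
proof (rule mult_power_le_of_large)
  assume "4 \<le> (norm c)\<^sup>2"
  then have c: "2 \<le> norm c" using power2_le_imp_le[of 2 "norm c"] by simp
  have "((norm c / 2)^p)^2 * gaussian_ball_mass CARD('n)
      \<le> L2_norm_sq (\<lambda>x. of_real (norm x ^ p) * packet_deriv k c xi (\<lambda>_. 0) x)"
  proof (rule L2_weighted_packet_deriv_ge[OF k])
    fix x :: "real^'n" assume "norm (x - c) < 1 / sqrt k"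
    moreover have "1 / sqrt k \<le> 1" using k by simp
    ultimately have "norm c / 2 \<le> norm x"
      using c norm_triangle_ineq[of x "c - x"] by (simp add: norm_minus_commute)
    then show "(norm c / 2)^p * cmod (packet_deriv k c xi (\<lambda>_. 0) x) \<le> norm x ^ p * cmod (packet_deriv k c xi (\<lambda>_. 0) x)"
      using c by (intro mult_right_mono power_mono) auto
  qed (use c in \<open>auto simp: mi_order_0\<close>)
  also have "\<dots> \<le> Hhat_norm_sq p k (packet_deriv k c xi (\<lambda>_. 0))"
    using Hhat_norm_sq_packet_term_le[of "\<lambda>_. 0" p p k c xi] k by (simp add: mi_order_0)
  also have "((norm c / 2)^p)^2 = ((norm c)\<^sup>2)^p / 4^p"
  proof -
    have "(2::real)^(p*2) = 4^p" by (subst mult.commute) (simp add: power_mult)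
    then show ?thesis by (simp add: power_divide flip: power_mult) (simp add: mult.commute)
  qed
  finally show "gaussian_ball_mass CARD('n) * ((norm c)\<^sup>2)^p \<le> 4^p * Hhat_norm_sq p k (packet_deriv k c xi (\<lambda>_. 0))"
    by (simp add: field_simps)
qed (use Hhat_norm_sq_packet_ge_mass[OF k] gaussian_ball_mass_pos in \<open>auto intro: less_imp_le\<close>)

lemma Hhat_norm_sq_packet_ge_frequency:
  fixes c xi :: "real^'n::finite" and p :: nat
  defines "R \<equiv> 2 * leibniz_tail_const p + 1"
  assumes k: "k \<ge> 1" and p: "p \<ge> 1"
  shows "gaussian_ball_mass CARD('n) * ((xi $ i)\<^sup>2)^p
    \<le> (4 + (R\<^sup>2)^p) * Hhat_norm_sq p k (packet_deriv k c xi (\<lambda>_. 0))"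
proof (rule mult_power_le_of_large)
  assume "R\<^sup>2 \<le> (xi $ i)\<^sup>2"
  then have large: "R \<le> \<bar>xi $ i\<bar>" using power2_le_imp_le[of R "\<bar>xi $ i\<bar>"] by simp
  define a where "a = (\<lambda>j::'n. if j = i then p else 0)"
  have order_a: "mi_order a = p" by (simp add: mi_order_def a_def)
  have "(k^p * \<bar>xi $ i\<bar>^p / 2)^2 * gaussian_ball_mass CARD('n)
      \<le> L2_norm_sq (\<lambda>x. of_real (norm x ^ 0) * packet_deriv k c xi a x)"
  proof (rule L2_weighted_packet_deriv_ge[OF k])
    fix x :: "real^'n" assume "norm (x - c) < 1 / sqrt k"
    moreover have "1 / sqrt k \<le> 1" using k by simp
    ultimately have "\<bar>x $ i - c $ i\<bar> \<le> 1"
      using component_le_norm_cart[of "x - c" i] by simp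
    then show "k^p * \<bar>xi $ i\<bar>^p / 2 * cmod (packet_deriv k c xi (\<lambda>_. 0) x) \<le> norm x ^ 0 * cmod (packet_deriv k c xi a x)"
      unfolding a_def using norm_packet_deriv_ge[OF k p _ large[unfolded R_def]] by simp
  qed (use k in \<open>auto simp: order_a\<close>)
  then have "k powr (- 2 * real p) * ((k^p * \<bar>xi $ i\<bar>^p / 2)^2 * gaussian_ball_mass CARD('n))
      \<le> k powr (- 2 * real p) * L2_norm_sq (\<lambda>x. of_real (norm x ^ 0) * packet_deriv k c xi a x)"
    by (rule mult_left_mono) simp
  also have "\<dots> \<le> Hhat_norm_sq p k (packet_deriv k c xi (\<lambda>_. 0))"
    using Hhat_norm_sq_packet_term_le[of a 0 p k c xi] order_a by simp
  also have "k powr (- 2 * real p) * ((k^p * \<bar>xi $ i\<bar>^p / 2)^2 * gaussian_ball_mass CARD('n))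
      = ((xi $ i)\<^sup>2)^p / 4 * gaussian_ball_mass CARD('n)"
  proof -
    have "(k^p)^2 = k^(2*p)" by (metis power_mult mult.commute)
    moreover have "(\<bar>xi $ i\<bar>^p)^2 = ((xi $ i)\<^sup>2)^p"
      by (simp add: power2_eq_square abs_mult_self_eq flip: power_mult_distrib)
    ultimately show ?thesis using powr_neg_mult_power_cancel[of k p] k
      by (simp add: power_mult_distrib power_divide mult_ac)
  qed
  finally show "gaussian_ball_mass CARD('n) * ((xi $ i)\<^sup>2)^p \<le> 4 * Hhat_norm_sq p k (packet_deriv k c xi (\<lambda>_. 0))"
    by (simp add: field_simps)
qed (use Hhat_norm_sq_packet_ge_mass[OF k] gaussian_ball_mass_pos leibniz_tail_const_nonneg[of p]
     in \<open>auto simp: R_def intro: less_imp_le\<close>)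

lemma exists_Hhat_norm_sq_packet_lower_bound:
  assumes p: "p \<ge> 1"
  shows "\<exists>mu>0. \<forall>k (c::real^'n::finite) xi. k \<ge> 1 \<longrightarrow>
    mu * (1 + (norm c)\<^sup>2 + (norm xi)\<^sup>2) ^ p \<le> Hhat_norm_sq p k (packet_deriv k c xi (\<lambda>_. 0))"
proof -
  define \<beta> where "\<beta> = gaussian_ball_mass CARD('n)"
  define R where "R = 2 * leibniz_tail_const p + 1"
  define D where "D = 1 + (4^p + 4^p) + real CARD('n) ^ p * (4 + (R\<^sup>2)^p)"
  have \<beta>: "\<beta> > 0" and D: "D > 0"
    using gaussian_ball_mass_pos by (auto simp: \<beta>_def D_def intro!: add_pos_nonneg)
  have "\<beta> / (3^p * D) * (1 + (norm c)\<^sup>2 + (norm xi)\<^sup>2) ^ p \<le> Hhat_norm_sq p k (packet_deriv k c xi (\<lambda>_. 0))"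
    if k: "k \<ge> 1" for k and c xi :: "real^'n"
  proof -
    let ?H = "Hhat_norm_sq p k (packet_deriv k c xi (\<lambda>_. 0))"
    obtain i where i: "(norm xi)\<^sup>2 \<le> real CARD('n) * (xi $ i)\<^sup>2"
      using exists_component_norm_sq_le by blast
    have "\<beta> * ((norm xi)\<^sup>2)^p \<le> real CARD('n) ^ p * (\<beta> * ((xi $ i)\<^sup>2)^p)"
      using \<beta> i by (auto simp: mult.left_commute simp flip: power_mult_distrib intro!: mult_left_mono power_mono)
    also have "\<dots> \<le> real CARD('n) ^ p * ((4 + (R\<^sup>2)^p) * ?H)"
      using Hhat_norm_sq_packet_ge_frequency[OF k p, of xi i c] by (simp add: \<beta>_def R_def)
    finally have freq: "\<beta> * ((norm xi)\<^sup>2)^p \<le> real CARD('n) ^ p * ((4 + (R\<^sup>2)^p) * ?H)" .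
    have "\<beta> * (1 + (norm c)\<^sup>2 + (norm xi)\<^sup>2) ^ p \<le> \<beta> * (3^p * (1 + ((norm c)\<^sup>2)^p + ((norm xi)\<^sup>2)^p))"
      using \<beta> by (intro mult_left_mono one_add_add_power_le) auto
    also have "\<dots> = 3^p * (\<beta> + \<beta> * ((norm c)\<^sup>2)^p + \<beta> * ((norm xi)\<^sup>2)^p)"
      by (simp add: algebra_simps)
    also have "\<dots> \<le> 3^p * (?H + (4^p + 4^p) * ?H + real CARD('n) ^ p * ((4 + (R\<^sup>2)^p) * ?H))"
      using Hhat_norm_sq_packet_ge_mass[OF k, where c = c and xi = xi and p = p]
        Hhat_norm_sq_packet_ge_center[OF k, where c = c and xi = xi and p = p] freq
      unfolding \<beta>_def[symmetric] by (intro mult_left_mono) auto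
    also have "\<dots> = 3^p * (D * ?H)"
      by (simp add: D_def algebra_simps)
    finally show ?thesis
      using D by (simp add: field_simps)
  qed
  moreover have "\<beta> / (3^p * D) > 0" using \<beta> D by simp
  ultimately show ?thesis by blast
qed

theorem lemmaC1:
  fixes p :: nat
  assumes "p \<ge> 1"
  shows "\<exists>mu lam::real. mu > 0 \<and> lam > 0 \<and>
    (\<forall>(k::real) (m::int^'n::finite) (n::int^'n). k \<ge> 1 \<longrightarrow>
      mu * (1 + (norm (lattice_pt k m))\<^sup>2 + (norm (lattice_pt k n))\<^sup>2) ^ p
        \<le> Hhat_norm_sq p k (Psi k m n) \<and>
      Hhat_norm_sq p k (Psi k m n)
        \<le> lam * (1 + (norm (lattice_pt k m))\<^sup>2 + (norm (lattice_pt k n))\<^sup>2) ^ p)"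
proof -
  obtain mu where mu: "mu > 0" and lower: "\<And>k (c::real^'n) xi. k \<ge> 1 \<Longrightarrow>
      mu * (1 + (norm c)\<^sup>2 + (norm xi)\<^sup>2) ^ p \<le> Hhat_norm_sq p k (packet_deriv k c xi (\<lambda>_. 0))"
    using exists_Hhat_norm_sq_packet_lower_bound[OF assms] by blast
  define lam where "lam = real (card {a::'n \<Rightarrow> nat. mi_order a \<le> p}) * real (p + 1) * packet_L2_bound CARD('n) p * 3^p"
  have "(\<lambda>_. 0) \<in> {a::'n \<Rightarrow> nat. mi_order a \<le> p}" by (simp add: mi_order_0)
  then have "card {a::'n \<Rightarrow> nat. mi_order a \<le> p} > 0"
    using finite_mi_order_le by (auto simp: card_gt_0_iff)
  then have lam: "lam > 0"
    using packet_L2_bound_pos[of "CARD('n)" p] by (simp add: lam_def)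
  show ?thesis
  proof (rule exI[of _ mu], rule exI[of _ lam], intro conjI allI impI mu lam)
    fix k :: real and m n :: "int^'n" assume k: "k \<ge> 1"
    show "mu * (1 + (norm (lattice_pt k m))\<^sup>2 + (norm (lattice_pt k n))\<^sup>2) ^ p \<le> Hhat_norm_sq p k (Psi k m n)"
      unfolding Psi_eq_packet_deriv by (rule lower[OF k])
  next
    fix k :: real and m n :: "int^'n" assume k: "k \<ge> 1"
    show "Hhat_norm_sq p k (Psi k m n) \<le> lam * (1 + (norm (lattice_pt k m))\<^sup>2 + (norm (lattice_pt k n))\<^sup>2) ^ p"
      unfolding Psi_eq_packet_deriv lam_def by (rule Hhat_norm_sq_packet_le[OF k])
  qed
qed

end
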